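(* Let $n\in\mathbb{N}$, $n\geq 2$, let $l\in(0,\frac{2}{n})$ and let $\alpha$ satisfy $\frac{2}{n}\leq\alpha<1+\frac{1}{n}-\frac{l}{2}$. Let $\theta$ with $1<\theta<\frac{n}{n-2}$ and $\mu>\frac{n}{2}$ be such that $$\frac{l(2\mu-1)}{4\mu-n}<\frac{n(\theta+1-2\alpha\theta)+2\theta}{2n\theta+n^2-n^2\theta},$$ and let $\theta'=\frac{\theta}{\theta-1}$, $\mu'=\frac{\mu}{\mu-1}$ be the conjugate exponents. Then there exist $p\in[1,\infty)$ and $q\in[1,\infty)$ such that the numbers $$a_1=\frac{\frac{np}{2}\big(1-\frac{1}{(p+2\alpha-2)\theta}\big)}{1-\frac n2+\frac{np}{2}},\quad a_2=\frac{nq\big(\frac1n-\frac{1}{2\theta'}\big)}{1-\frac n2+q},\quad a_3=\frac{\frac{np}{2l}\big(1-\frac{1}{2\mu}\big)}{1-\frac n2+\frac{np}{2l}},$$ $$a_4=\frac{nq\big(\frac1n-\frac{1}{2(q-1)\mu'}\big)}{1-\frac n2+q},\quad \kappa_1=\frac{\frac{np}{2}\big(1-\frac1p\big)}{1-\frac n2+\frac{np}{2}},\quad \kappa_2=\frac{q-\frac n2}{1-\frac n2+q}$$ all belong to $(0,1)$, and moreover $$\frac{p-2+2\alpha}{p}a_1+\frac1q a_2\in(0,1)\quad\text{and}\quad \frac{2l}{p}a_3+\frac{q-1}{q}a_4\in(0,1).$$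
   Context: For $n=2$ the condition $1<\theta<\frac{n}{n-2}$ is understood as $\theta>1$. *)

theory Defs
  imports "HOL-Analysis.Analysis"
begin

end

(*
  All eight quantities tend to 1 from below as p and q tend to infinity. Each a_i and kappa_i can
  be written as a / (a + c) with a, c > 0 once p resp. q is large. For the two weighted sums,
  q is coupled to p by 1 - n/2 + q = k (1 - n/2 + n p / 2) =: k D. With B = n - (n - 2) theta,
  A = theta (2 + n - 2 n alpha) + n, r = n l (2 mu - 1) and c = 4 mu - n, the first sum equals
  1 - (A k - B) / (2 theta k D) and the second equals 1 - (c / (2 mu k D) - r / (mu Z)) with
  Z = n p - (n - 2) l ~ 2 D, so both lie in (0, 1) for large p as soon as B / A < k < c / r.
  The last hypothesis says precisely r B < c A, i.e. that this window is nonempty.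
*)

theory Submission
  imports Defs "HOL-Real_Asymp.Real_Asymp"
begin

lemma divide_add_in_unit_interval:
  fixes a c :: real
  assumes "0 < a" "0 < c"
  shows "a / (a + c) \<in> {0<..<1}"
  using assms by simp

lemma kappa1_eventually_in_unit_interval:
  fixes N :: real
  assumes "0 < N"
  shows "\<forall>\<^sub>F p in at_top. (N * p / 2 * (1 - 1 / p)) / (1 - N / 2 + N * p / 2) \<in> {0<..<1}"
  using eventually_gt_at_top[of 1]
proof eventually_elim
  case (elim p)
  have num: "N * p / 2 * (1 - 1 / p) = N * (p - 1) / 2"
    using elim by (simp add: field_simps)
  have den: "1 - N / 2 + N * p / 2 = (N * (p - 1) + 2) / 2"
    by (simp add: field_simps)
  have "N * (p - 1) / (N * (p - 1) + 2) \<in> {0<..<1}"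
    using assms elim by (intro divide_add_in_unit_interval) auto
  then show ?case
    unfolding num den by simp
qed

lemma kappa2_eventually_in_unit_interval:
  fixes N :: real
  shows "\<forall>\<^sub>F q in at_top. (q - N / 2) / (1 - N / 2 + q) \<in> {0<..<1}"
  using eventually_gt_at_top[of "N / 2"]
proof eventually_elim
  case (elim q)
  have "(q - N / 2) / ((q - N / 2) + 1) \<in> {0<..<1}"
    using elim by (intro divide_add_in_unit_interval) auto
  then show ?case
    by (simp add: algebra_simps)
qed

lemma a1_eventually_in_unit_interval:
  fixes N \<alpha> \<theta> :: real
  assumes "0 < N" "0 < \<theta>" "(N - 2) * \<theta> < N"
  shows "\<forall>\<^sub>F p in at_top.
    (N * p / 2 * (1 - 1 / ((p + 2 * \<alpha> - 2) * \<theta>))) / (1 - N / 2 + N * p / 2) \<in> {0<..<1}"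
proof -
  have "0 < N - (N - 2) * \<theta>"
    using assms by simp
  then have "\<forall>\<^sub>F p in at_top. 0 < p \<and> 1 < (p + 2 * \<alpha> - 2) * \<theta> \<and>
      (N - 2) * ((p + 2 * \<alpha> - 2) * \<theta>) < N * p"
    using assms by (intro eventually_conj; real_asymp)
  then show ?thesis
  proof eventually_elim
    case (elim p)
    define v where "v = (p + 2 * \<alpha> - 2) * \<theta>"
    have v: "1 < v" "(N - 2) * v < N * p"
      using elim by (simp_all add: v_def)
    have num: "N * p / 2 * (1 - 1 / v) = N * p * (v - 1) / (2 * v)"
      using v by (simp add: field_simps)
    have den: "1 - N / 2 + N * p / 2 = (N * p * (v - 1) + (N * p - (N - 2) * v)) / (2 * v)"
      using v by (simp add: field_simps)
    have "N * p * (v - 1) / (N * p * (v - 1) + (N * p - (N - 2) * v)) \<in> {0<..<1}"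
      using assms elim v by (intro divide_add_in_unit_interval) auto
    then show ?case
      using v unfolding v_def[symmetric] num den by simp
  qed
qed

lemma a2_eventually_in_unit_interval:
  fixes N \<theta> :: real
  assumes "0 < N" "1 < \<theta>" "(N - 2) * \<theta> < N"
  shows "\<forall>\<^sub>F q in at_top.
    (N * q * (1 / N - 1 / (2 * (\<theta> / (\<theta> - 1))))) / (1 - N / 2 + q) \<in> {0<..<1}"
proof -
  have "\<forall>\<^sub>F q in at_top. 0 < q \<and> (N - 2) * \<theta> < q * (N * (\<theta> - 1))"
    using assms by (intro eventually_conj; real_asymp)
  then show ?thesis
  proof eventually_elim
    case (elim q)
    have num: "N * q * (1 / N - 1 / (2 * (\<theta> / (\<theta> - 1)))) = q * (N - (N - 2) * \<theta>) / (2 * \<theta>)"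
      using assms by (simp add: field_simps)
    have den: "1 - N / 2 + q = (q * (N - (N - 2) * \<theta>) + (q * (N * (\<theta> - 1)) - (N - 2) * \<theta>)) / (2 * \<theta>)"
      using assms by (simp add: field_simps)
    have "q * (N - (N - 2) * \<theta>) / (q * (N - (N - 2) * \<theta>) + (q * (N * (\<theta> - 1)) - (N - 2) * \<theta>)) \<in> {0<..<1}"
      using assms elim by (intro divide_add_in_unit_interval) auto
    then show ?case
      using assms unfolding num den by simp
  qed
qed

lemma a3_eventually_in_unit_interval:
  fixes N l \<mu> :: real
  assumes "0 < N" "0 < l" "1 < 2 * \<mu>"
  shows "\<forall>\<^sub>F p in at_top.
    (N * p / (2 * l) * (1 - 1 / (2 * \<mu>))) / (1 - N / 2 + N * p / (2 * l)) \<in> {0<..<1}"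
proof -
  have "\<forall>\<^sub>F p in at_top. 0 < p \<and> 2 * l * \<mu> * (N - 2) < N * p"
    using assms by (intro eventually_conj; real_asymp)
  then show ?thesis
  proof eventually_elim
    case (elim p)
    have num: "N * p / (2 * l) * (1 - 1 / (2 * \<mu>)) = N * p * (2 * \<mu> - 1) / (4 * l * \<mu>)"
      using assms by (simp add: field_simps)
    have den: "1 - N / 2 + N * p / (2 * l)
        = (N * p * (2 * \<mu> - 1) + (N * p - 2 * l * \<mu> * (N - 2))) / (4 * l * \<mu>)"
      using assms by (simp add: field_simps)
    have "N * p * (2 * \<mu> - 1) / (N * p * (2 * \<mu> - 1) + (N * p - 2 * l * \<mu> * (N - 2))) \<in> {0<..<1}"
      using assms elim by (intro divide_add_in_unit_interval) auto
    then show ?case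
      using assms unfolding num den by simp
  qed
qed

lemma a4_eventually_in_unit_interval:
  fixes N \<mu> :: real
  assumes "2 \<le> N" "N < 2 * \<mu>"
  shows "\<forall>\<^sub>F q in at_top.
    (N * q * (1 / N - 1 / (2 * (q - 1) * (\<mu> / (\<mu> - 1))))) / (1 - N / 2 + q) \<in> {0<..<1}"
proof -
  have "\<forall>\<^sub>F q in at_top. 1 < q \<and> N * (\<mu> - 1) < 2 * (q - 1) * \<mu>"
    using assms by (intro eventually_conj; real_asymp)
  then show ?thesis
  proof eventually_elim
    case (elim q)
    have num: "N * q * (1 / N - 1 / (2 * (q - 1) * (\<mu> / (\<mu> - 1))))
        = q * (2 * (q - 1) * \<mu> - N * (\<mu> - 1)) / (2 * (q - 1) * \<mu>)"
      using assms elim by (simp add: field_simps)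
    have den: "1 - N / 2 + q = (q * (2 * (q - 1) * \<mu> - N * (\<mu> - 1)) + (q * (2 * \<mu> - N) + \<mu> * (N - 2)))
        / (2 * (q - 1) * \<mu>)"
      using assms elim by (simp add: field_simps)
    have "q * (2 * (q - 1) * \<mu> - N * (\<mu> - 1))
        / (q * (2 * (q - 1) * \<mu> - N * (\<mu> - 1)) + (q * (2 * \<mu> - N) + \<mu> * (N - 2))) \<in> {0<..<1}"
      using assms elim by (intro divide_add_in_unit_interval add_pos_nonneg) auto
    then show ?case
      using assms elim unfolding num den by simp
  qed
qed

lemma a1_a2_weighted_sum_eventually_in_unit_interval:
  fixes N \<alpha> \<theta> k :: real and q :: "real \<Rightarrow> real"
  assumes "0 < N" "1 < \<theta>" "0 < k"
    and window: "N - (N - 2) * \<theta> < (\<theta> * (2 + N - 2 * N * \<alpha>) + N) * k"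
    and q_ratio: "\<And>p. 1 - N / 2 + q p = k * (1 - N / 2 + N * p / 2)"
  shows "\<forall>\<^sub>F p in at_top.
    (p - 2 + 2 * \<alpha>) / p * ((N * p / 2 * (1 - 1 / ((p + 2 * \<alpha> - 2) * \<theta>))) / (1 - N / 2 + N * p / 2))
    + 1 / q p * ((N * q p * (1 / N - 1 / (2 * (\<theta> / (\<theta> - 1))))) / (1 - N / 2 + q p)) \<in> {0<..<1}"
proof -
  define e where "e = (\<theta> * (2 + N - 2 * N * \<alpha>) + N) * k - (N - (N - 2) * \<theta>)"
  have "0 < e"
    using window by (simp add: e_def)
  then have "\<forall>\<^sub>F p in at_top. 0 < p \<and> 0 < p + 2 * \<alpha> - 2 \<and> 0 < k * (1 - N / 2 + N * p / 2) - 1 + N / 2 \<and>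
      0 < e / (2 * \<theta> * k * (1 - N / 2 + N * p / 2)) \<and> e / (2 * \<theta> * k * (1 - N / 2 + N * p / 2)) < 1"
    using assms by (intro eventually_conj; real_asymp)
  then show ?thesis
  proof eventually_elim
    case (elim p)
    define D where "D = 1 - N / 2 + N * p / 2"
    define u where "u = p + 2 * \<alpha> - 2"
    have "q p = k * D - 1 + N / 2"
      using q_ratio[of p] by (simp add: D_def)
    then have "q p \<noteq> 0" "D \<noteq> 0" "u \<noteq> 0"
      using elim by (auto simp: D_def u_def)
    have "p - 2 + 2 * \<alpha> = u"
      by (simp add: u_def)
    then have term1: "(p - 2 + 2 * \<alpha>) / p * ((N * p / 2 * (1 - 1 / (u * \<theta>))) / D)
        = N * (u * \<theta> - 1) / (2 * \<theta> * D)"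
      using elim assms \<open>D \<noteq> 0\<close> \<open>u \<noteq> 0\<close> by (simp add: field_simps)
    have term2: "1 / q p * ((N * q p * (1 / N - 1 / (2 * (\<theta> / (\<theta> - 1))))) / (k * D))
        = (N - (N - 2) * \<theta>) / (2 * \<theta> * k * D)"
      using assms \<open>q p \<noteq> 0\<close> \<open>D \<noteq> 0\<close> by (simp add: field_simps)
    have e: "e = 2 * \<theta> * k * D - (k * (N * (u * \<theta> - 1)) + (N - (N - 2) * \<theta>))"
      unfolding D_def u_def e_def by (simp add: algebra_simps)
    have "N * (u * \<theta> - 1) / (2 * \<theta> * D) + (N - (N - 2) * \<theta>) / (2 * \<theta> * k * D)
        = 1 - e / (2 * \<theta> * k * D)"
      unfolding e using assms \<open>D \<noteq> 0\<close> by (simp add: field_simps)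
    then show ?case
      using elim term1 term2 unfolding q_ratio D_def[symmetric] u_def[symmetric] by simp
  qed
qed

lemma a3_a4_weighted_sum_eventually_in_unit_interval:
  fixes N l \<mu> k :: real and q :: "real \<Rightarrow> real"
  assumes "0 < N" "0 < l" "1 < \<mu>" "0 < k"
    and window: "N * l * (2 * \<mu> - 1) * k < 4 * \<mu> - N"
    and q_ratio: "\<And>p. 1 - N / 2 + q p = k * (1 - N / 2 + N * p / 2)"
  shows "\<forall>\<^sub>F p in at_top.
    2 * l / p * ((N * p / (2 * l) * (1 - 1 / (2 * \<mu>))) / (1 - N / 2 + N * p / (2 * l)))
    + (q p - 1) / q p * ((N * q p * (1 / N - 1 / (2 * (q p - 1) * (\<mu> / (\<mu> - 1))))) / (1 - N / 2 + q p))
    \<in> {0<..<1}"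
proof -
  define r where "r = N * l * (2 * \<mu> - 1)"
  define c where "c = 4 * \<mu> - N"
  have "0 < c - r * k"
    using window by (simp add: r_def c_def)
  then have "\<forall>\<^sub>F p in at_top. 0 < p \<and> 1 < k * (1 - N / 2 + N * p / 2) - 1 + N / 2 \<and>
      0 < 1 - N / 2 + N * p / 2 \<and> 0 < 2 * l - N * l + N * p \<and>
      r * (2 * k * (1 - N / 2 + N * p / 2)) < c * (2 * l - N * l + N * p) \<and>
      c / (2 * \<mu> * k * (1 - N / 2 + N * p / 2)) < 1"
    using assms by (intro eventually_conj; real_asymp)
  then show ?thesis
  proof eventually_elim
    case (elim p)
    define D where "D = 1 - N / 2 + N * p / 2"
    define Z where "Z = 2 * l - N * l + N * p"
    have q: "q p = k * D - 1 + N / 2"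
      using q_ratio[of p] by (simp add: D_def)
    then have "1 < q p" "0 < D" "0 < Z"
      using elim by (auto simp: D_def Z_def)
    have "1 - N / 2 + N * p / (2 * l) = Z / (2 * l)"
      using assms by (simp add: Z_def field_simps)
    then have term1: "2 * l / p * ((N * p / (2 * l) * (1 - 1 / (2 * \<mu>))) / (1 - N / 2 + N * p / (2 * l)))
        = r / (\<mu> * Z)"
      using elim assms \<open>0 < Z\<close> by (simp add: r_def field_simps)
    have "N * q p * (1 / N - 1 / (2 * (q p - 1) * (\<mu> / (\<mu> - 1))))
        = q p * (2 * (q p - 1) * \<mu> - N * (\<mu> - 1)) / (2 * (q p - 1) * \<mu>)"
      using assms \<open>1 < q p\<close> by (simp add: field_simps)
    also have "2 * (q p - 1) * \<mu> - N * (\<mu> - 1) = 2 * \<mu> * k * D - c"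
      unfolding q c_def by (simp add: algebra_simps)
    finally have num: "N * q p * (1 / N - 1 / (2 * (q p - 1) * (\<mu> / (\<mu> - 1))))
        = q p * (2 * \<mu> * k * D - c) / (2 * (q p - 1) * \<mu>)" .
    have term2: "(q p - 1) / q p * ((N * q p * (1 / N - 1 / (2 * (q p - 1) * (\<mu> / (\<mu> - 1))))) / (k * D))
        = 1 - c / (2 * \<mu> * k * D)"
      unfolding num using assms \<open>1 < q p\<close> \<open>0 < D\<close> by (simp add: field_simps)
    have "r / (\<mu> * Z) < c / (2 * \<mu> * k * D)"
      using elim assms \<open>0 < Z\<close> \<open>0 < D\<close> unfolding D_def[symmetric] Z_def[symmetric]
      by (simp add: field_simps)
    moreover have "0 < r / (\<mu> * Z)"
      using assms \<open>0 < Z\<close> by (simp add: r_def)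
    ultimately show ?case
      using elim term1 term2 unfolding q_ratio D_def[symmetric] by simp
  qed
qed

lemma exists_pos_between_ratios:
  fixes a b c r :: real
  assumes "0 < b" "0 < r" "0 < c" "r * b < c * a"
  shows "\<exists>k>0. b < a * k \<and> r * k < c"
proof -
  have "0 < c * a"
    using mult_pos_pos[OF assms(2,1)] assms(4) by linarith
  then have "0 < a"
    using assms(3) by (simp add: zero_less_mult_iff)
  then have "b / a < c / r"
    using assms by (simp add: field_simps)
  then obtain k where k: "b / a < k" "k < c / r"
    using dense by blast
  have "0 < k"
    using k(1) \<open>0 < a\<close> assms(1) by (meson divide_pos_pos less_trans)
  with k show ?thesis
    using \<open>0 < a\<close> assms(2) by (auto simp: field_simps)
qed

lemma exists_ratio_window:
  fixes N l \<alpha> \<theta> \<mu> :: real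
  assumes "0 < N" "0 < l" "(N - 2) * \<theta> < N" "N < 2 * \<mu>" "1 < 2 * \<mu>"
    and "l * (2 * \<mu> - 1) / (4 * \<mu> - N)
      < (N * (\<theta> + 1 - 2 * \<alpha> * \<theta>) + 2 * \<theta>) / (2 * N * \<theta> + N^2 - N^2 * \<theta>)"
  shows "\<exists>k>0. N - (N - 2) * \<theta> < (\<theta> * (2 + N - 2 * N * \<alpha>) + N) * k
    \<and> N * l * (2 * \<mu> - 1) * k < 4 * \<mu> - N"
proof (rule exists_pos_between_ratios)
  have cross: "a * d < c * b" if "a / b < c / d" "0 < b" "0 < d" for a b c d :: real
    using that by (simp add: field_simps)
  have "(N * (\<theta> + 1 - 2 * \<alpha> * \<theta>) + 2 * \<theta>) / (2 * N * \<theta> + N^2 - N^2 * \<theta>)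
      = (\<theta> * (2 + N - 2 * N * \<alpha>) + N) / (N * (N - (N - 2) * \<theta>))"
    by (simp add: algebra_simps power2_eq_square)
  then have "l * (2 * \<mu> - 1) * (N * (N - (N - 2) * \<theta>)) < (\<theta> * (2 + N - 2 * N * \<alpha>) + N) * (4 * \<mu> - N)"
    using assms by (intro cross) auto
  then show "N * l * (2 * \<mu> - 1) * (N - (N - 2) * \<theta>) < (4 * \<mu> - N) * (\<theta> * (2 + N - 2 * N * \<alpha>) + N)"
    by (simp add: algebra_simps)
qed (use assms in auto)

theorem lemma4p6:
  fixes n :: nat and l \<alpha> \<theta> \<mu> :: real
  assumes hn: "n \<ge> 2"
    and hl: "0 < l" "l < 2 / real n"
    and h\<alpha>: "2 / real n \<le> \<alpha>" "\<alpha> < 1 + 1 / real n - l / 2"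
    and h\<theta>: "1 < \<theta>" "n = 2 \<or> \<theta> < real n / (real n - 2)"
    and h\<mu>: "\<mu> > real n / 2"
    and hcond: "l * (2 * \<mu> - 1) / (4 * \<mu> - real n)
       < (real n * (\<theta> + 1 - 2 * \<alpha> * \<theta>) + 2 * \<theta>)
         / (2 * real n * \<theta> + (real n)^2 - (real n)^2 * \<theta>)"
  shows "\<exists>p q :: real. 1 \<le> p \<and> 1 \<le> q \<and>
    (let \<theta>' = \<theta> / (\<theta> - 1); \<mu>' = \<mu> / (\<mu> - 1);
         a1 = (real n * p / 2 * (1 - 1 / ((p + 2 * \<alpha> - 2) * \<theta>))) / (1 - real n / 2 + real n * p / 2);
         a2 = (real n * q * (1 / real n - 1 / (2 * \<theta>'))) / (1 - real n / 2 + q);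
         a3 = (real n * p / (2 * l) * (1 - 1 / (2 * \<mu>))) / (1 - real n / 2 + real n * p / (2 * l));
         a4 = (real n * q * (1 / real n - 1 / (2 * (q - 1) * \<mu>'))) / (1 - real n / 2 + q);
         \<kappa>1 = (real n * p / 2 * (1 - 1 / p)) / (1 - real n / 2 + real n * p / 2);
         \<kappa>2 = (q - real n / 2) / (1 - real n / 2 + q)
     in a1 \<in> {0<..<1} \<and> a2 \<in> {0<..<1} \<and> a3 \<in> {0<..<1} \<and> a4 \<in> {0<..<1} \<and>
        \<kappa>1 \<in> {0<..<1} \<and> \<kappa>2 \<in> {0<..<1} \<and>
        (p - 2 + 2 * \<alpha>) / p * a1 + 1 / q * a2 \<in> {0<..<1} \<and>
        2 * l / p * a3 + (q - 1) / q * a4 \<in> {0<..<1})"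
proof -
  let ?N = "real n"
  have N: "2 \<le> ?N" "0 < ?N"
    using hn by simp_all
  have \<theta>: "0 < \<theta>"
    using h\<theta>(1) by simp
  have B: "(?N - 2) * \<theta> < ?N"
    using h\<theta>(2) N(1) by (cases "n = 2") (auto simp: less_divide_eq mult.commute)
  have \<mu>: "?N < 2 * \<mu>" "1 < 2 * \<mu>" "1 < \<mu>"
    using h\<mu> N by simp_all
  obtain k where k: "0 < k" "?N - (?N - 2) * \<theta> < (\<theta> * (2 + ?N - 2 * ?N * \<alpha>) + ?N) * k"
    "?N * l * (2 * \<mu> - 1) * k < 4 * \<mu> - ?N"
    using exists_ratio_window[OF N(2) hl(1) B \<mu>(1,2) hcond] by blast
  define q where "q p = k * (1 - ?N / 2 + ?N * p / 2) - 1 + ?N / 2" for p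
  have q_ratio: "1 - ?N / 2 + q p = k * (1 - ?N / 2 + ?N * p / 2)" for p
    by (simp add: q_def)
  have "filterlim q at_top at_top"
    unfolding q_def using k N by real_asymp
  note on_q = eventually_compose_filterlim[OF _ this]
  have ex: "\<exists>p q. P p q" if "\<forall>\<^sub>F p in at_top. P p (q p)" for P :: "real \<Rightarrow> real \<Rightarrow> bool"
    using eventually_happens'[OF _ that] by auto
  show ?thesis
    apply (rule ex)
    using eventually_ge_at_top[of 1] on_q[OF eventually_ge_at_top[of 1]]
      a1_eventually_in_unit_interval[where \<alpha> = \<alpha>, OF N(2) \<theta> B]
      on_q[OF a2_eventually_in_unit_interval[OF N(2) h\<theta>(1) B]]
      a3_eventually_in_unit_interval[OF N(2) hl(1) \<mu>(2)]
      on_q[OF a4_eventually_in_unit_interval[OF N(1) \<mu>(1)]]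
      kappa1_eventually_in_unit_interval[OF N(2)]
      on_q[OF kappa2_eventually_in_unit_interval[of ?N]]
      a1_a2_weighted_sum_eventually_in_unit_interval[OF N(2) h\<theta>(1) k(1,2) q_ratio]
      a3_a4_weighted_sum_eventually_in_unit_interval[OF N(2) hl(1) \<mu>(3) k(1,3) q_ratio]
    apply eventually_elim
    unfolding Let_def by blast
qed

end
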